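(* Let $a_{\inf},a_{\sup},b_{\inf},b_{\sup},\chi,\mu$ be positive constants with $a_{\inf}\le a_{\sup}$, $b_{\inf}\le b_{\sup}$, and suppose $b_{\inf}>\big(1+\frac{a_{\sup}}{a_{\inf}}\big)\chi\mu$. Define sequences by $\underline{M}_0=0$ and, for $n\ge0$, $$\overline{M}_n=\frac{a_{\sup}-\chi\mu\underline{M}_n}{b_{\inf}-\chi\mu},\qquad \underline{M}_{n+1}=\frac{a_{\inf}-\chi\mu\overline{M}_n}{b_{\sup}-\chi\mu}.$$ Then for every $n\ge0$, $\underline{M}_{n+1}>\underline{M}_n\ge0$ and $\overline{M}_n>\overline{M}_{n+1}>0$, and $\lim_{n\to\infty}(\underline{M}_n,\overline{M}_n)=(\underline{M},\overline{M})$, where $$\underline{M}:=\frac{(b_{\inf}-\chi\mu)a_{\inf}-\chi\mu a_{\sup}}{(b_{\sup}-\chi\mu)(b_{\inf}-\chi\mu)-(\chi\mu)^2},\qquad \overline{M}:=\frac{(b_{\sup}-\chi\mu)a_{\sup}-\chi\mu a_{\inf}}{(b_{\sup}-\chi\mu)(b_{\inf}-\chi\mu)-(\chi\mu)^2}.$$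
   Context: In the paper, $a_{\inf},a_{\sup}$ (resp. $b_{\inf},b_{\sup}$) are the infimum and supremum over $(x,t)\in\mathbb{R}^N\times\mathbb{R}$ of positive bounded functions $a(x,t)$ (resp. $b(x,t)$). *)

theory Defs
  imports "HOL-Analysis.Analysis"
begin

fun M_low :: "real \<Rightarrow> real \<Rightarrow> real \<Rightarrow> real \<Rightarrow> real \<Rightarrow> real \<Rightarrow> nat \<Rightarrow> real" where
  "M_low ainf asup binf bsup chi mu 0 = 0"
| "M_low ainf asup binf bsup chi mu (Suc n) =
     (ainf - chi * mu * ((asup - chi * mu * M_low ainf asup binf bsup chi mu n) / (binf - chi * mu)))
       / (bsup - chi * mu)"

definition M_up :: "real \<Rightarrow> real \<Rightarrow> real \<Rightarrow> real \<Rightarrow> real \<Rightarrow> real \<Rightarrow> nat \<Rightarrow> real" where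
  "M_up ainf asup binf bsup chi mu n =
     (asup - chi * mu * M_low ainf asup binf bsup chi mu n) / (binf - chi * mu)"

end

theory Submission
  imports Defs
begin

text \<open>Eliminating \<open>M_up n\<close> gives \<open>M_low (n+1) = (1 - q) M + q M_low n\<close>, where \<open>M\<close> is
  the claimed lower limit and \<open>q = (\<chi>\<mu>)\<^sup>2 / ((b_sup - \<chi>\<mu>)(b_inf - \<chi>\<mu>))\<close>. The
  hypothesis on \<open>b_inf\<close> gives \<open>b_inf - \<chi>\<mu> > \<chi>\<mu>\<close>, hence \<open>0 < q < 1\<close> and \<open>M > 0\<close>, so
  \<open>M_low n = M (1 - q\<^sup>n)\<close> increases strictly to \<open>M\<close>. Since \<open>M_up n\<close> is a strictly
  decreasing affine function of \<open>M_low n\<close>, it decreases strictly to the image of \<open>M\<close>,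
  which is the claimed (positive) upper limit.\<close>

lemma affine_iteration_closed_form:
  fixes x :: "nat \<Rightarrow> 'a::comm_ring_1"
  assumes "x 0 = 0" and "\<And>n. x (Suc n) = (1 - q) * M + q * x n"
  shows "x n = M - M * q ^ n"
proof (induction n)
  case 0
  then show ?case using assms(1) by simp
next
  case (Suc n)
  have "x (Suc n) = (1 - q) * M + q * (M - M * q ^ n)"
    using Suc assms(2) by simp
  also have "\<dots> = M - M * q ^ Suc n"
    by (simp add: algebra_simps)
  finally show ?case .
qed

context
  fixes x :: "nat \<Rightarrow> real" and M q :: real
  assumes x_0: "x 0 = 0" and x_Suc: "\<And>n. x (Suc n) = (1 - q) * M + q * x n"
    and M_pos: "0 < M" and q_pos: "0 < q" and q_less_1: "q < 1"
begin

private lemma closed_form: "x n = M - M * q ^ n"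
  using affine_iteration_closed_form x_0 x_Suc by blast

lemma affine_iteration_strict_mono: "x n < x (Suc n)"
proof -
  have "q ^ Suc n < q ^ n"
    using q_pos q_less_1 by (simp add: power_strict_decreasing)
  then show ?thesis using closed_form M_pos by simp
qed

lemma affine_iteration_nonneg: "0 \<le> x n"
  using closed_form[of n] M_pos q_pos q_less_1 by (simp add: power_le_one)

lemma affine_iteration_less_limit: "x n < M"
  using closed_form[of n] M_pos q_pos by simp

lemma affine_iteration_tendsto: "x \<longlonglongrightarrow> M"
proof -
  have "(\<lambda>n. M - M * q ^ n) \<longlonglongrightarrow> M - M * 0"
    using q_pos q_less_1 by (intro tendsto_intros LIMSEQ_power_zero) auto
  moreover have "x = (\<lambda>n. M - M * q ^ n)"
    using closed_form by (rule ext)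
  ultimately show ?thesis by simp
qed

end

locale M_iteration =
  fixes ainf asup binf bsup chi mu :: real
  assumes ainf_pos: "0 < ainf" and ainf_le_asup: "ainf \<le> asup"
    and binf_le_bsup: "binf \<le> bsup" and chi_mu_pos: "0 < chi * mu"
    and binf_large: "(1 + asup / ainf) * chi * mu < binf"
begin

abbreviation "k \<equiv> chi * mu"
abbreviation "A \<equiv> binf - k"
abbreviation "B \<equiv> bsup - k"
abbreviation "D \<equiv> B * A - k\<^sup>2"
abbreviation "q \<equiv> k\<^sup>2 / (B * A)"
abbreviation "L \<equiv> M_low ainf asup binf bsup chi mu"
abbreviation "U \<equiv> M_up ainf asup binf bsup chi mu"
abbreviation "L_lim \<equiv> (A * ainf - k * asup) / D"
abbreviation "U_lim \<equiv> (B * asup - k * ainf) / D"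

lemma k_asup_less_A_ainf: "k * asup < A * ainf"
proof -
  have "k + k * asup / ainf < binf"
    using binf_large by (simp add: algebra_simps)
  then have "k * asup / ainf * ainf < A * ainf"
    using ainf_pos by (intro mult_strict_right_mono) auto
  then show ?thesis using ainf_pos by simp
qed

lemma k_less_A: "k < A"
proof -
  have "k * ainf \<le> k * asup"
    using ainf_le_asup chi_mu_pos by (simp add: mult_left_mono)
  then show ?thesis
    using k_asup_less_A_ainf ainf_pos by (meson le_less_trans mult_less_cancel_right_pos)
qed

lemma A_pos: "0 < A" and B_pos: "0 < B"
  using k_less_A chi_mu_pos binf_le_bsup by auto

lemma k_sq_less_B_A: "k\<^sup>2 < B * A"
proof -
  have "k * k < B * A"
    using k_less_A binf_le_bsup chi_mu_pos by (intro mult_strict_mono) auto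
  then show ?thesis by (simp add: power2_eq_square)
qed

lemma D_pos: "0 < D"
  using k_sq_less_B_A by simp

lemma L_Suc_affine: "L (Suc n) = (1 - q) * L_lim + q * L n"
proof -
  \<comment> \<open>Proved for fresh variables, where the simplifier cannot split up \<open>k = chi * mu\<close>.\<close>
  have "(a1 - c * ((a2 - c * y) / A')) / B'
      = (1 - c\<^sup>2 / (B' * A')) * ((A' * a1 - c * a2) / (B' * A' - c\<^sup>2))
        + c\<^sup>2 / (B' * A') * y"
    if "0 < A'" "0 < B'" "c\<^sup>2 < B' * A'" for a1 a2 c y A' B' :: real
  proof -
    have "B' * A' - c\<^sup>2 \<noteq> 0" using that by simp
    then show ?thesis
      using that
      by (simp add: field_simps) (simp add: algebra_simps power2_eq_square power4_eq_xxxx)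
  qed
  from this[OF A_pos B_pos k_sq_less_B_A] show ?thesis by simp
qed

lemma U_eq: "U n = (asup - k * L n) / A"
  by (simp add: M_up_def)

lemma U_lim_eq: "U_lim = (asup - k * L_lim) / A"
proof -
  have "(B' * a2 - c * a1) / (B' * A' - c\<^sup>2)
      = (a2 - c * ((A' * a1 - c * a2) / (B' * A' - c\<^sup>2))) / A'"
    if "0 < A'" "c\<^sup>2 < B' * A'" for a1 a2 c A' B' :: real
  proof -
    have "B' * A' - c\<^sup>2 \<noteq> 0" using that by simp
    then show ?thesis
      using that
      by (simp add: field_simps) (simp add: algebra_simps power2_eq_square power4_eq_xxxx)
  qed
  from this[OF A_pos k_sq_less_B_A] show ?thesis .
qed

lemma U_lim_pos: "0 < U_lim"
proof -
  have "k * ainf < B * ainf"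
    using k_less_A binf_le_bsup ainf_pos by simp
  also have "\<dots> \<le> B * asup"
    using B_pos ainf_le_asup by simp
  finally show ?thesis using D_pos by simp
qed

lemma L_lim_pos: "0 < L_lim"
  using k_asup_less_A_ainf D_pos by simp

lemma q_pos: "0 < q"
  using chi_mu_pos A_pos B_pos by (intro divide_pos_pos) auto

lemma q_less_1: "q < 1"
  using A_pos B_pos k_sq_less_B_A by simp

lemma L_strict_mono: "L n < L (Suc n)"
  using affine_iteration_strict_mono[where x = L and M = L_lim and q = q]
    L_Suc_affine L_lim_pos q_pos q_less_1
  by simp

lemma L_nonneg: "0 \<le> L n"
  using affine_iteration_nonneg[where x = L and M = L_lim and q = q]
    L_Suc_affine L_lim_pos q_pos q_less_1
  by simp

lemma L_less_L_lim: "L n < L_lim"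
  using affine_iteration_less_limit[where x = L and M = L_lim and q = q]
    L_Suc_affine L_lim_pos q_pos q_less_1
  by simp

lemma L_tendsto: "L \<longlonglongrightarrow> L_lim"
  using affine_iteration_tendsto[where x = L and M = L_lim and q = q]
    L_Suc_affine L_lim_pos q_pos q_less_1
  by simp

lemma U_from_L_strict_antimono:
  assumes "x < y"
  shows "(asup - k * y) / A < (asup - k * x) / A"
proof -
  have "k * x < k * y"
    using assms chi_mu_pos by (rule mult_strict_left_mono)
  then show ?thesis
    using A_pos by (intro divide_strict_right_mono) auto
qed

lemma U_strict_antimono: "U (Suc n) < U n"
  unfolding U_eq by (rule U_from_L_strict_antimono[OF L_strict_mono])

lemma U_greater_U_lim: "U_lim < U n"
  unfolding U_eq U_lim_eq by (rule U_from_L_strict_antimono[OF L_less_L_lim])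

lemma U_tendsto: "U \<longlonglongrightarrow> U_lim"
proof -
  have "(\<lambda>n. (asup - k * L n) / A) \<longlonglongrightarrow> (asup - k * L_lim) / A"
    by (intro tendsto_intros L_tendsto) (use A_pos in simp)
  then show ?thesis unfolding U_eq U_lim_eq .
qed

end

theorem lemma3p4:
  fixes ainf asup binf bsup chi mu :: real
  assumes "ainf > 0" "asup > 0" "binf > 0" "bsup > 0" "chi > 0" "mu > 0"
    and "ainf \<le> asup" "binf \<le> bsup"
    and "binf > (1 + asup / ainf) * chi * mu"
  shows "(\<forall>n. M_low ainf asup binf bsup chi mu (Suc n) > M_low ainf asup binf bsup chi mu n
              \<and> M_low ainf asup binf bsup chi mu n \<ge> 0
              \<and> M_up ainf asup binf bsup chi mu n > M_up ainf asup binf bsup chi mu (Suc n)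
              \<and> M_up ainf asup binf bsup chi mu (Suc n) > 0)
       \<and> ((\<lambda>n. (M_low ainf asup binf bsup chi mu n, M_up ainf asup binf bsup chi mu n))
            \<longlonglongrightarrow>
            (((binf - chi*mu) * ainf - chi*mu*asup) / ((bsup - chi*mu) * (binf - chi*mu) - (chi*mu)^2),
             ((bsup - chi*mu) * asup - chi*mu*ainf) / ((bsup - chi*mu) * (binf - chi*mu) - (chi*mu)^2)))"
proof -
  interpret M_iteration ainf asup binf bsup chi mu
    using assms by unfold_locales auto
  have "0 < U (Suc n)" for n
    using U_lim_pos U_greater_U_lim[of "Suc n"] by linarith
  then show ?thesis
    using L_strict_mono L_nonneg U_strict_antimono tendsto_Pair[OF L_tendsto U_tendsto]
    by auto
qed

end
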